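(* Let $c_1>0$, $c_3>0$, $r_2>0$, $r_4>0$, $\tau>0$, $a_1=2\pi c_3\frac{2c_1}{c_1+c_3}$, $a_2=2\pi c_3\frac{c_1-c_3}{c_1+c_3}$, and \[ A=\begin{pmatrix}-a_1r_2&0\\0&-(a_1-a_2)r_4\end{pmatrix},\quad B=\begin{pmatrix}0&-a_1r_4\\-a_1r_2&0\end{pmatrix},\quad C=\begin{pmatrix}0&0\\0&-a_2r_4\end{pmatrix}, \] $\Delta(s)=sI-A-Be^{-\tau s}-Ce^{-2\tau s}$. Let $M$ be the residue of $s\mapsto\Delta^{-1}(s)$ at $s=0$ (i.e. $M=\lim_{s\to0}s\Delta^{-1}(s)$). Suppose $h:[0,\infty)\to\mathbb{R}^2$ is continuous and exponentially bounded, i.e. $\|h(t)\|\le K_1e^{-\beta t}$ for all $t\ge0$ with constants $K_1>0$, $\beta>0$, and let $\phi\in C([-2\tau,0],\mathbb{R}^2)$. Let $x$ be the solution of \[ \dot x(t)=Ax(t)+Bx(t-\tau)+Cx(t-2\tau)+h(t),\quad t\ge0,\qquad x(\theta)=\phi(\theta),\ \theta\in[-2\tau,0]. \] Then \[ \lim_{t\to\infty}x(t)=M\Big[\phi(0)+B\int_0^\tau\phi(\theta-\tau)\,d\theta+C\int_0^{2\tau}\phi(\theta-2\tau)\,d\theta+\int_0^\infty h(\theta)\,d\theta\Big]. \]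
   Context: In the physical model $c_i=\cos\theta_i/n_i$ with refractive indices $n_i>0$ and angles $\theta_i\in[0,\pi/2)$; the constant matrix $M$ satisfies $(A+B+C)M=0$. *)

theory Defs
  imports "HOL-Analysis.Analysis"
begin

definition cvec :: "real^2 \<Rightarrow> complex^2" where
  "cvec v = (\<chi> i. complex_of_real (v $ i))"

definition cmat :: "real^2^2 \<Rightarrow> complex^2^2" where
  "cmat M = (\<chi> i j. complex_of_real (M $ i $ j))"

definition char_matrix :: "real^2^2 \<Rightarrow> real^2^2 \<Rightarrow> real^2^2 \<Rightarrow> real \<Rightarrow> complex \<Rightarrow> complex^2^2" where
  "char_matrix A B C \<tau> s =
     (\<chi> i j. (if i = j then s else 0) - cmat A $ i $ j
              - exp (- (of_real \<tau>) * s) * cmat B $ i $ j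
              - exp (- 2 * (of_real \<tau>) * s) * cmat C $ i $ j)"

end

theory Submission
  imports Defs
begin

text \<open>
  Write u, y for the components of x. Then
  u' = - p u - q y(t - \<tau>) + h1 and y' = - b y - p u(t - \<tau>) - d y(t - 2\<tau>) + h2
  with p = a1 r2, b = 2 \<pi> c3 r4, d = a2 r4 and q = b + d, and \<bar>d\<bar> < b.
  The unforced part z = y' - h2 of y' satisfies
  z' = - (p + b) z - p b y + S(t - 2\<tau>) + g with S = p b y - d z and g exponentially small,
  and V = P(z, y) + (integral of S^2 over [t - 2\<tau>, t]), with a positive definite quadratic
  form P, satisfies V' \<le> - (p^2 + b^2 - d^2) z^2 + O(exp(- \<beta> t)) (1 + V).
  Hence V is bounded and z is square integrable, so z tends to 0 by Barbalat's lemma,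
  and then u', y' and p u + q y tend to 0.
  Integrating the system over the delay windows gives the first integral
  Q = u - y + p \<integral>[t-\<tau>,t] u - q \<integral>[t-\<tau>,t] y + d \<integral>[t-2\<tau>,t] y - \<integral>[0,t] (h1 - h2),
  and letting t tend to \<infinity> in Q(t) = Q(0) gives u \<rightarrow> q \<kappa> and y \<rightarrow> - p \<kappa>, where
  \<kappa> = (Q(0) + \<integral>[0,\<infinity>) (h1 - h2)) / (p + q + 2 \<tau> p b).
  On the other hand det \<Delta> has a simple zero at 0 with derivative p + q + 2 \<tau> p b,
  which makes the residue M explicit, and M maps the vector of the statement to (q \<kappa>, - p \<kappa>).
\<close>

section \<open>Calculus on half-lines\<close>

lemma integral_atLeast_has_real_derivative:
  fixes f :: "real \<Rightarrow> real"
  assumes "continuous_on {a..} f" "a < t"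
  shows "((\<lambda>s. integral {a..s} f) has_real_derivative f t) (at t)"
proof -
  have "continuous_on {a..t+1} f" using assms(1) by (rule continuous_on_subset) auto
  then have "((\<lambda>s. integral {a..s} f) has_real_derivative f t) (at t within {a..t+1})"
    using integral_has_real_derivative assms(2) by auto
  moreover have "at t within {a..t+1} = at t"
    using assms(2) by (intro at_within_interior) auto
  ultimately show ?thesis by simp
qed

lemma integral_window_eq:
  fixes f :: "real \<Rightarrow> real"
  assumes "continuous_on {a..} f" "a \<le> t - c" "0 \<le> c"
  shows "integral {t-c..t} f = integral {a..t} f - integral {a..t-c} f"
proof -
  have "f integrable_on {a..t}"
    by (intro integrable_continuous_real continuous_on_subset[OF assms(1)]) auto
  with assms(2,3) show ?thesis
    using Henstock_Kurzweil_Integration.integral_combine[of a "t-c" t f] by simp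
qed

lemma integral_window_has_real_derivative:
  fixes f :: "real \<Rightarrow> real"
  assumes f: "continuous_on {a..} f" and "a < t - c" "0 \<le> c"
  shows "((\<lambda>s. integral {s-c..s} f) has_real_derivative f t - f (t - c)) (at t)"
proof -
  have "((\<lambda>s. integral {a..s} f) has_real_derivative f (t - c)) (at (t - c))"
    using assms by (intro integral_atLeast_has_real_derivative[OF f]) auto
  then have "((\<lambda>s. integral {a..s-c} f) has_real_derivative f (t - c)) (at t)"
    using DERIV_shift[of "\<lambda>s. integral {a..s} f" "f (t - c)" t "-c"] by simp
  then have "((\<lambda>s. integral {a..s} f - integral {a..s-c} f) has_real_derivative f t - f (t - c)) (at t)"
    using assms by (intro DERIV_diff integral_atLeast_has_real_derivative[OF f]) auto
  then show ?thesis
    by (rule has_field_derivative_transform_within_open[where S = "{a+c<..}"])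
      (use assms in \<open>auto intro: integral_window_eq[OF f, symmetric]\<close>)
qed

lemma continuous_on_integral_window:
  fixes f :: "real \<Rightarrow> real"
  assumes f: "continuous_on {a..} f" and "0 \<le> c"
  shows "continuous_on {a+c..b} (\<lambda>s. integral {s-c..s} f)"
proof -
  have F: "continuous_on {a..b} (\<lambda>s. integral {a..s} f)"
    by (intro indefinite_integral_continuous_1 integrable_continuous_real
        continuous_on_subset[OF f]) auto
  have "continuous_on {a+c..b} (\<lambda>s. integral {a..s} f - integral {a..s-c} f)"
    using assms(2)
    by (intro continuous_on_diff continuous_on_subset[OF F] continuous_on_compose2[OF F]
        continuous_intros) auto
  then show ?thesis
    by (rule continuous_on_eq) (use assms in \<open>auto intro: integral_window_eq[symmetric]\<close>)
qed

lemma abs_diff_le_by_deriv_bound: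
  fixes f f' :: "real \<Rightarrow> real"
  assumes "\<And>z. z \<in> {s..t} \<Longrightarrow> (f has_real_derivative f' z) (at z)"
    and "\<And>z. z \<in> {s..t} \<Longrightarrow> \<bar>f' z\<bar> \<le> B" and "s \<le> t"
  shows "\<bar>f t - f s\<bar> \<le> B * (t - s)"
  using field_differentiable_bound[of "{s..t}" f f' B t s] assms
  by (auto intro: has_field_derivative_at_within)

lemma tendsto_at_top_shift:
  fixes f :: "real \<Rightarrow> 'a::topological_space"
  assumes "(f \<longlongrightarrow> l) at_top"
  shows "((\<lambda>t. f (t + c)) \<longlongrightarrow> l) at_top"
proof -
  have "filterlim (\<lambda>t::real. t + c) at_top at_top"
    by (rule filterlim_tendsto_add_at_top[OF tendsto_const filterlim_ident, of c, simplified add.commute])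
  from filterlim_compose[OF assms this] show ?thesis by simp
qed

lemma eventually_oscillation_le_of_deriv_tendsto_0:
  fixes f f' :: "real \<Rightarrow> real"
  assumes der: "\<And>t. t \<ge> a \<Longrightarrow> (f has_real_derivative f' t) (at t)"
    and lim: "(f' \<longlongrightarrow> 0) at_top" and "0 \<le> c" "0 < e"
  shows "eventually (\<lambda>t. \<forall>s\<in>{t-c..t}. \<bar>f t - f s\<bar> \<le> e) at_top"
proof -
  have "e / (c + 1) > 0" using assms by simp
  from tendstoD[OF lim this] obtain t0 where t0: "\<And>t. t \<ge> t0 \<Longrightarrow> \<bar>f' t\<bar> < e / (c + 1)"
    by (auto simp: eventually_at_top_linorder)
  have "\<bar>f t - f s\<bar> \<le> e" if "t \<ge> max t0 a + c" "s \<in> {t-c..t}" for t s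
  proof -
    have "\<bar>f t - f s\<bar> \<le> e / (c + 1) * (t - s)"
      using that by (intro abs_diff_le_by_deriv_bound[of s t f f'] der) (auto intro!: less_imp_le[OF t0])
    also have "\<dots> \<le> e / (c + 1) * (c + 1)"
      using that assms by (intro mult_left_mono) auto
    finally show ?thesis using assms by simp
  qed
  then show ?thesis
    unfolding eventually_at_top_linorder by (intro exI[of _ "max t0 a + c"]) auto
qed

lemma tendsto_diff_shift_of_deriv_tendsto_0:
  fixes f f' :: "real \<Rightarrow> real"
  assumes "\<And>t. t \<ge> a \<Longrightarrow> (f has_real_derivative f' t) (at t)"
    and "(f' \<longlongrightarrow> 0) at_top" and "0 \<le> c"
  shows "((\<lambda>t. f t - f (t - c)) \<longlongrightarrow> 0) at_top"
proof (rule tendstoI)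
  fix e :: real assume "e > 0"
  then have "eventually (\<lambda>t. \<forall>s\<in>{t-c..t}. \<bar>f t - f s\<bar> \<le> e / 2) at_top"
    using assms by (intro eventually_oscillation_le_of_deriv_tendsto_0) auto
  then show "eventually (\<lambda>t. dist (f t - f (t - c)) 0 < e) at_top"
  proof eventually_elim
    case (elim t)
    then have "\<bar>f t - f (t - c)\<bar> \<le> e / 2" using \<open>0 \<le> c\<close> by auto
    then show ?case using \<open>e > 0\<close> by (simp add: dist_real_def)
  qed
qed

lemma tendsto_integral_window_of_deriv_tendsto_0:
  fixes f f' :: "real \<Rightarrow> real"
  assumes der: "\<And>t. t \<ge> a \<Longrightarrow> (f has_real_derivative f' t) (at t)"
    and "(f' \<longlongrightarrow> 0) at_top" and c: "0 \<le> c"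
  shows "((\<lambda>t. integral {t-c..t} f - c * f t) \<longlongrightarrow> 0) at_top"
proof (rule tendstoI)
  fix e :: real assume e: "e > 0"
  have "eventually (\<lambda>t. \<forall>s\<in>{t-c..t}. \<bar>f t - f s\<bar> \<le> e / (c + 1)) at_top"
    using e c by (intro eventually_oscillation_le_of_deriv_tendsto_0[OF assms]) auto
  with eventually_ge_at_top[of "a + c"]
  show "eventually (\<lambda>t. dist (integral {t-c..t} f - c * f t) 0 < e) at_top"
  proof eventually_elim
    case (elim t)
    have "continuous_on {t-c..t} f"
      using elim c by (intro continuous_at_imp_continuous_on ballI DERIV_isCont[OF der]) auto
    then have hi: "((\<lambda>s. f s - f t) has_integral integral {t-c..t} f - c * f t) {t-c..t}"
      using has_integral_diff[OF integrable_integral[OF integrable_continuous_real]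
          has_integral_const_real[of "f t" "t-c" t]] c by (simp add: algebra_simps)
    have "norm (integral {t-c..t} f - c * f t) \<le> e / (c + 1) * c"
      using has_integral_bound_real[OF _ _ hi, of "e / (c + 1)" "{}"] elim e c
      by (auto simp: abs_minus_commute)
    also have "\<dots> < e" using e c by (simp add: field_simps)
    finally show ?case by (simp add: dist_real_def)
  qed
qed

lemma barbalat:
  fixes f f' :: "real \<Rightarrow> real"
  assumes der: "\<And>t. t \<ge> a \<Longrightarrow> (f has_real_derivative f' t) (at t)"
    and bd: "\<And>t. t \<ge> a \<Longrightarrow> \<bar>f' t\<bar> \<le> L"
    and nn: "\<And>t. t \<ge> a \<Longrightarrow> f t \<ge> 0"
    and ib: "\<And>t. t \<ge> a \<Longrightarrow> integral {a..t} f \<le> B"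
  shows "(f \<longlongrightarrow> 0) at_top"
proof (rule tendstoI)
  fix e :: real assume e: "e > 0"
  define F where "F t = integral {a..t} f" for t
  have cont: "continuous_on {a..} f"
    by (intro continuous_at_imp_continuous_on ballI DERIV_isCont[OF der]) auto
  have intg: "f integrable_on {s..t}" if "a \<le> s" for s t
    using that by (intro integrable_continuous_real continuous_on_subset[OF cont]) auto
  have F_add: "F t = F s + integral {s..t} f" if "a \<le> s" "s \<le> t" for s t
    unfolding F_def using Henstock_Kurzweil_Integration.integral_combine[OF that intg] by simp
  have F_mono: "F s \<le> F t" if "a \<le> s" "s \<le> t" for s t
  proof -
    have "integral {s..t} f \<ge> 0" using that nn by (intro integral_nonneg intg) auto
    then show ?thesis using F_add[OF that] by simp
  qed
  define l where "l = (SUP t\<in>{a..}. F t)"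
  have bdd: "bdd_above (F ` {a..})" using ib unfolding F_def bdd_above_def by auto
  have F_le: "F t \<le> l" if "t \<ge> a" for t
    unfolding l_def using bdd that by (intro cSUP_upper) auto
  define d where "d = e / (2 * max L 1)"
  have d: "d > 0" "d * max L 1 = e / 2" using e by (simp_all add: d_def)
  have "l - d * e / 2 < l" using d e by simp
  then obtain t0 where t0: "t0 \<ge> a" "F t0 > l - d * e / 2"
    unfolding l_def using bdd by (subst (asm) less_cSUP_iff) auto
  have "f t < e" if t: "t \<ge> t0" for t
  proof (rule ccontr)
    assume "\<not> f t < e"
    have "f s \<ge> e / 2" if s: "s \<in> {t..t+d}" for s
    proof -
      have "\<bar>f s - f t\<bar> \<le> max L 1 * (s - t)"
        using s t t0 by (intro abs_diff_le_by_deriv_bound[of t s f f'] der order_trans[OF bd]) auto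
      also have "\<dots> \<le> max L 1 * d" using s by (intro mult_left_mono) auto
      finally have "\<bar>f s - f t\<bar> \<le> e / 2" using d by (simp add: mult.commute)
      then show ?thesis using \<open>\<not> f t < e\<close> abs_le_D2[of "f s - f t"] by linarith
    qed
    then have "integral {t..t+d} (\<lambda>_. e / 2) \<le> integral {t..t+d} f"
      using t t0 by (intro integral_le intg) auto
    then have "F (t + d) \<ge> F t0 + d * e / 2"
      using F_add[of t "t + d"] F_mono[of t0 t] t t0 d by simp
    then show False using F_le[of "t + d"] t t0 d by simp
  qed
  then show "eventually (\<lambda>t. dist (f t) 0 < e) at_top"
    unfolding eventually_at_top_linorder dist_real_def
    using nn t0 by (intro exI[of _ t0]) auto
qed

lemma tendsto_exp_neg_mult_at_top:
  fixes \<beta> :: real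
  assumes "\<beta> > 0"
  shows "((\<lambda>t. exp (- \<beta> * t)) \<longlongrightarrow> 0) at_top"
  using assms by (intro filterlim_compose[OF exp_at_bot] filterlim_tendsto_neg_mult_at_bot
      tendsto_const filterlim_ident) auto

lemma tendsto_integral_atLeast_of_exp_bound:
  fixes h :: "real \<Rightarrow> 'a::euclidean_space"
  assumes hc: "continuous_on {0..} h"
    and hb: "\<And>t. t \<ge> 0 \<Longrightarrow> norm (h t) \<le> K * exp (- \<beta> * t)" and beta: "\<beta> > 0"
  shows "((\<lambda>t. integral {0..t} h) \<longlongrightarrow> integral {0..} h) at_top"
proof -
  have exp_int: "((\<lambda>x. K * exp (- \<beta> * x)) has_integral K * (exp (- \<beta> * t) / \<beta>)) {t..}" for t
    using has_integral_mult_right[OF has_integral_exp_minus_to_infinity[OF beta]] .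
  have meas: "h \<in> borel_measurable (lebesgue_on {t..})" if "t \<ge> 0" for t
    using that by (intro continuous_imp_measurable_on_sets_lebesgue continuous_on_subset[OF hc]) auto
  have tail: "norm (integral {t..} h) \<le> K * (exp (- \<beta> * t) / \<beta>)" if "t \<ge> 0" for t
    using that hb by (intro integral_norm_bound_integral'[OF _ meas _ exp_int]) auto
  have split: "integral {0..} h = integral {0..t} h + integral {t..} h" if t: "t \<ge> 0" for t
  proof -
    have "h integrable_on {0..t}"
      by (intro integrable_continuous_real continuous_on_subset[OF hc]) auto
    moreover have "h integrable_on {t..}"
      using t hb by (intro measurable_bounded_by_integrable_imp_integrable[OF meas[OF t]
            has_integral_integrable[OF exp_int]]) auto
    moreover have "{0..t} \<union> {t..} = {0..}" "{0..t} \<inter> {t..} = {t}" using t by auto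
    ultimately show ?thesis using integral_Un[of h "{0..t}" "{t..}"] by simp
  qed
  have "((\<lambda>t. integral {0..} h - integral {0..t} h) \<longlongrightarrow> 0) at_top"
  proof (rule Lim_null_comparison)
    show "eventually (\<lambda>t. norm (integral {0..} h - integral {0..t} h) \<le> K * (exp (- \<beta> * t) / \<beta>)) at_top"
      using eventually_ge_at_top[of 0] by eventually_elim (use split tail in auto)
    show "((\<lambda>t. K * (exp (- \<beta> * t) / \<beta>)) \<longlongrightarrow> 0) at_top"
      using tendsto_mult_right_zero[OF tendsto_divide_zero[OF tendsto_exp_neg_mult_at_top[OF beta]]]
      by simp
  qed
  from tendsto_diff[OF tendsto_const[of "integral {0..} h"] this] show ?thesis by simp
qed

lemma abs_lin_comb_le:
  fixes a c x y :: real
  shows "\<bar>a * x + c * y\<bar> \<le> (\<bar>a\<bar> + \<bar>c\<bar>) * (\<bar>x\<bar> + \<bar>y\<bar>)"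
proof -
  have "\<bar>a * x + c * y\<bar> \<le> \<bar>a\<bar> * \<bar>x\<bar> + \<bar>c\<bar> * \<bar>y\<bar>"
    by (metis abs_mult abs_triangle_ineq)
  also have "\<dots> \<le> (\<bar>a\<bar> + \<bar>c\<bar>) * (\<bar>x\<bar> + \<bar>y\<bar>)"
    by (simp add: algebra_simps)
  finally show ?thesis .
qed

lemma abs_le_1_plus_square: "\<bar>a::real\<bar> \<le> 1 + a\<^sup>2"
proof (cases "\<bar>a\<bar> \<le> 1")
  case False
  then have "\<bar>a\<bar> * 1 \<le> \<bar>a\<bar> * \<bar>a\<bar>" by (intro mult_left_mono) auto
  then show ?thesis by (simp add: power2_eq_square abs_mult_self_eq)
qed (use zero_le_power2[of a] in linarith)

lemma continuous_on_shift:
  fixes f :: "real \<Rightarrow> real"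
  assumes "continuous_on {a..} f" "c \<le> -a"
  shows "continuous_on {0..} (\<lambda>t. f (t - c))"
  using assms by (intro continuous_on_compose2[OF assms(1)] continuous_intros) auto

section \<open>2x2 matrices\<close>

lemma matrix_inv_eqI:
  fixes A B :: "'a::comm_ring_1^'n^'n"
  assumes AB: "A ** B = mat 1" and BA: "B ** A = mat 1"
  shows "matrix_inv A = B"
  unfolding matrix_inv_def
proof (rule some_equality)
  fix B' assume B': "A ** B' = mat 1 \<and> B' ** A = mat 1"
  have "B' = B' ** (A ** B)" by (simp add: AB matrix_mul_rid)
  also have "\<dots> = (B' ** A) ** B" by (simp add: matrix_mul_assoc)
  also have "\<dots> = B" using B' by (simp add: matrix_mul_lid)
  finally show "B' = B" .
qed (use AB BA in simp)

lemma matrix_inv_2x2: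
  fixes a b c e :: "'a::field"
  assumes det: "a * e - b * c \<noteq> 0"
  shows "matrix_inv (vector [vector [a, b], vector [c, e]] :: 'a^2^2) =
     vector [vector [e / (a * e - b * c), - b / (a * e - b * c)],
             vector [- c / (a * e - b * c), a / (a * e - b * c)]]"
proof -
  have "a*(a*(e*e)) + b*(b*(c*c)) - a*(b*(c*(e*2))) = (a*e - b*c) * (a*e - b*c)"
    by (simp add: algebra_simps)
  then have "a*(a*(e*e)) + b*(b*(c*c)) \<noteq> a*(b*(c*(e*2)))"
    using det by auto
  with det show ?thesis
    by (intro matrix_inv_eqI)
      (simp_all add: vec_eq_iff forall_2 matrix_matrix_mult_def mat_def UNIV_2 field_simps)
qed

lemma tendsto_vector_2:
  fixes f g :: "'b \<Rightarrow> 'a::{topological_space,zero}"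
  assumes "(f \<longlongrightarrow> a) F" "(g \<longlongrightarrow> b) F"
  shows "((\<lambda>x. vector [f x, g x] :: 'a^2) \<longlongrightarrow> vector [a, b]) F"
proof (rule vec_tendstoI)
  fix i :: 2
  show "((\<lambda>x. (vector [f x, g x] :: 'a^2) $ i) \<longlongrightarrow> (vector [a, b] :: 'a^2) $ i) F"
    using exhaust_2[of i] assms by auto
qed

lemma tendsto_mult_matrix_inv_2x2:
  fixes a b c e :: "'a::real_normed_field \<Rightarrow> 'a"
  assumes "(a \<longlongrightarrow> a0) (at 0)" "(b \<longlongrightarrow> b0) (at 0)" "(c \<longlongrightarrow> c0) (at 0)" "(e \<longlongrightarrow> e0) (at 0)"
    and det: "((\<lambda>s. (a s * e s - b s * c s) / s) \<longlongrightarrow> D) (at 0)" and "D \<noteq> 0"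
  shows "((\<lambda>s. \<chi> i j. s * matrix_inv (vector [vector [a s, b s], vector [c s, e s]] :: 'a^2^2) $ i $ j)
           \<longlongrightarrow> vector [vector [e0 / D, - b0 / D], vector [- c0 / D, a0 / D]]) (at 0)"
proof -
  define d where "d s = (a s * e s - b s * c s) / s" for s
  have "eventually (\<lambda>s. d s \<noteq> 0) (at 0)"
    using tendsto_imp_eventually_ne[OF det[folded d_def] \<open>D \<noteq> 0\<close>] .
  moreover have "eventually (\<lambda>s. s \<noteq> 0) (at (0::'a))"
    by (simp add: eventually_at_filter)
  ultimately have ev: "eventually (\<lambda>s. (\<chi> i j. s * matrix_inv (vector [vector [a s, b s], vector [c s, e s]] :: 'a^2^2) $ i $ j)
      = vector [vector [e s / d s, - b s / d s], vector [- c s / d s, a s / d s]]) (at 0)"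
  proof eventually_elim
    case (elim s)
    then have "a s * e s - b s * c s \<noteq> 0" by (simp add: d_def)
    then show ?case
      using elim by (simp add: matrix_inv_2x2 d_def vec_eq_iff forall_2)
  qed
  moreover have lim: "((\<lambda>s. vector [vector [e s / d s, - b s / d s], vector [- c s / d s, a s / d s]] :: 'a^2^2)
      \<longlongrightarrow> vector [vector [e0 / D, - b0 / D], vector [- c0 / D, a0 / D]]) (at 0)"
    unfolding d_def using assms by (intro tendsto_vector_2 tendsto_intros) auto
  ultimately show ?thesis using tendsto_cong[OF ev] by blast
qed

lemma cmat_mult_cvec: "cmat R *v cvec w = cvec (R *v w)"
  by (simp add: vec_eq_iff cmat_def cvec_def matrix_vector_mult_def)

lemma tendsto_cvec: "(f \<longlongrightarrow> l) F \<Longrightarrow> ((\<lambda>t. cvec (f t)) \<longlongrightarrow> cvec l) F"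
  unfolding cvec_def by (intro vec_tendstoI) (auto intro: tendsto_of_real tendsto_vec_nth)

section \<open>The scalar delay system\<close>

locale delay_system =
  fixes p b d q \<tau> K \<beta> :: real and u y k1 k2 :: "real \<Rightarrow> real"
  assumes p_pos: "p > 0" and b_pos: "b > 0" and abs_d_less: "\<bar>d\<bar> < b" and q_eq: "q = b + d"
    and tau_pos: "\<tau> > 0" and beta_pos: "\<beta> > 0"
    and u_cont: "continuous_on {-2*\<tau>..} u" and y_cont: "continuous_on {-2*\<tau>..} y"
    and k1_cont: "continuous_on {0..} k1" and k2_cont: "continuous_on {0..} k2"
    and k1_bound: "\<And>t. t \<ge> 0 \<Longrightarrow> \<bar>k1 t\<bar> \<le> K * exp (- \<beta> * t)"
    and k2_bound: "\<And>t. t \<ge> 0 \<Longrightarrow> \<bar>k2 t\<bar> \<le> K * exp (- \<beta> * t)"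
    and u_ode: "\<And>t. t > 0 \<Longrightarrow>
      (u has_real_derivative (- p * u t - q * y (t - \<tau>) + k1 t)) (at t)"
    and y_ode: "\<And>t. t > 0 \<Longrightarrow>
      (y has_real_derivative (- b * y t - p * u (t - \<tau>) - d * y (t - 2*\<tau>) + k2 t)) (at t)"
begin

definition "u' t = - p * u t - q * y (t - \<tau>) + k1 t"
definition "y' t = - b * y t - p * u (t - \<tau>) - d * y (t - 2*\<tau>) + k2 t"

definition "z t = - b * y t - p * u (t - \<tau>) - d * y (t - 2*\<tau>)"
definition "z' t = - b * y' t - p * u' (t - \<tau>) - d * y' (t - 2*\<tau>)"
definition "g t = - b * k2 t - p * k1 (t - \<tau>) - d * k2 (t - 2*\<tau>)"

(* A Lyapunov-Krasovskii functional: P is positive definite, being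
   b (z + p y)^2 + p z^2 + p b q y^2, and the integral term compensates the delayed term
   S(t - 2\<tau>) of z'. *)
definition "S t = p * b * y t - d * z t"
definition "P t = (p + b) * (z t)\<^sup>2 + 2 * p * b * y t * z t + p * b * (p + q) * (y t)\<^sup>2"
definition "V t = P t + integral {t - 2*\<tau>..t} (\<lambda>s. (S s)\<^sup>2)"
definition "V' t = (p + b) * (2 * z t * z' t) + 2 * p * b * (y' t * z t + y t * z' t)
   + p * b * (p + q) * (2 * y t * y' t) + ((S t)\<^sup>2 - (S (t - 2*\<tau>))\<^sup>2)"
definition "\<gamma> = p\<^sup>2 + b\<^sup>2 - d\<^sup>2"
definition "perturbation t = 2 * g t * ((p + b) * z t + p * b * y t) + 2 * p * b * k2 t * (z t + (p + q) * y t)"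

lemma K_nonneg: "K \<ge> 0"
  using order_trans[OF abs_ge_zero k1_bound[of 0]] by simp

lemma q_pos: "q > 0"
  using q_eq abs_d_less by linarith

lemma gamma_pos: "\<gamma> > 0"
proof -
  have "\<bar>d\<bar> * \<bar>d\<bar> < b * b" using abs_d_less by (intro mult_strict_mono) auto
  then have "d\<^sup>2 < b\<^sup>2" by (simp add: power2_eq_square abs_mult_self_eq)
  moreover have "p\<^sup>2 > 0" using p_pos by simp
  ultimately show ?thesis unfolding \<gamma>_def by linarith
qed

lemma u_has_derivative: "t > 0 \<Longrightarrow> (u has_real_derivative u' t) (at t)"
  unfolding u'_def by (rule u_ode)

lemma y_has_derivative: "t > 0 \<Longrightarrow> (y has_real_derivative y' t) (at t)"
  unfolding y'_def by (rule y_ode)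

lemma y'_eq: "y' t = z t + k2 t"
  unfolding y'_def z_def by simp

lemma continuous_on_z: "continuous_on {0..} z"
  unfolding z_def using tau_pos
  by (intro continuous_intros continuous_on_shift[OF y_cont, of 0, simplified]
      continuous_on_shift[OF u_cont] continuous_on_shift[OF y_cont]) auto

lemma continuous_on_S2: "continuous_on {0..} (\<lambda>s. (S s)\<^sup>2)"
  unfolding S_def using tau_pos
  by (intro continuous_intros continuous_on_z continuous_on_subset[OF y_cont]) auto

lemma z_has_derivative:
  assumes t: "t > 2*\<tau>"
  shows "(z has_real_derivative z' t) (at t)"
proof -
  have "((\<lambda>s. u (s - \<tau>)) has_real_derivative u' (t - \<tau>)) (at t)"
    using DERIV_shift[of u "u' (t - \<tau>)" t "- \<tau>"] u_has_derivative[of "t - \<tau>"] t tau_pos by simp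
  moreover have "((\<lambda>s. y (s - 2*\<tau>)) has_real_derivative y' (t - 2*\<tau>)) (at t)"
    using DERIV_shift[of y "y' (t - 2*\<tau>)" t "- 2*\<tau>"] y_has_derivative[of "t - 2*\<tau>"] t by simp
  moreover have "(y has_real_derivative y' t) (at t)" using t tau_pos by (intro y_has_derivative) auto
  ultimately show ?thesis
    unfolding z_def[abs_def] z'_def by (intro derivative_eq_intros) auto
qed

lemma z'_eq: "z' t = - (p + b) * z t - p * b * y t + S (t - 2*\<tau>) + g t"
proof -
  have shift: "t - \<tau> - \<tau> = t - 2*\<tau>" "t - 2*\<tau> - \<tau> = t - \<tau> - 2*\<tau>" by simp_all
  show ?thesis
    unfolding z'_def y'_def u'_def S_def z_def g_def shift by (simp add: algebra_simps q_eq)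
qed

lemma V_has_derivative:
  assumes t: "t > 2*\<tau>"
  shows "(V has_real_derivative V' t) (at t)"
proof -
  have y: "(y has_real_derivative y' t) (at t)" using t tau_pos by (intro y_has_derivative) auto
  have z: "(z has_real_derivative z' t) (at t)" using t by (rule z_has_derivative)
  have S: "((\<lambda>s. integral {s - 2*\<tau>..s} (\<lambda>r. (S r)\<^sup>2)) has_real_derivative (S t)\<^sup>2 - (S (t - 2*\<tau>))\<^sup>2) (at t)"
    using t tau_pos by (intro integral_window_has_real_derivative[OF continuous_on_S2]) auto
  show ?thesis
    unfolding V_def[abs_def] P_def V'_def
    by ((rule derivative_eq_intros y z S refl | simp)+) (simp add: algebra_simps)
qed

lemma V'_eq: "V' t = - (z' t - g t)\<^sup>2 - \<gamma> * (z t)\<^sup>2 + perturbation t"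
proof -
  have "S (t - 2*\<tau>) = z' t + (p + b) * z t + p * b * y t - g t" by (simp add: z'_eq algebra_simps)
  then show ?thesis unfolding V'_def \<gamma>_def perturbation_def y'_eq S_def[of t] using q_eq by algebra
qed

definition "c0 = min p (p * b * q)"
definition "Kg = K * (b + p * exp (\<beta> * \<tau>) + \<bar>d\<bar> * exp (2 * \<beta> * \<tau>))"
definition "Kw = 2 * Kg * (p + b + p * b) + 2 * p * b * K * (1 + p + q)"
definition "Ke = Kw * (2 + 1 / c0)"

lemma c0_pos: "c0 > 0"
  unfolding c0_def using p_pos b_pos q_pos by simp

lemma Kg_nonneg: "Kg \<ge> 0"
  unfolding Kg_def using K_nonneg p_pos b_pos by simp

lemma Kw_nonneg: "Kw \<ge> 0"
  unfolding Kw_def using Kg_nonneg K_nonneg p_pos b_pos q_pos by simp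

lemma Ke_nonneg: "Ke \<ge> 0"
  unfolding Ke_def using Kw_nonneg c0_pos by simp

lemma P_ge: "P t \<ge> c0 * ((z t)\<^sup>2 + (y t)\<^sup>2)"
proof -
  have "P t = b * (z t + p * y t)\<^sup>2 + p * (z t)\<^sup>2 + p * b * q * (y t)\<^sup>2"
    unfolding P_def by (simp add: power2_eq_square algebra_simps)
  moreover have "c0 * (z t)\<^sup>2 \<le> p * (z t)\<^sup>2" "c0 * (y t)\<^sup>2 \<le> p * b * q * (y t)\<^sup>2"
    unfolding c0_def by (intro mult_right_mono; simp)+
  moreover have "b * (z t + p * y t)\<^sup>2 \<ge> 0" using b_pos by simp
  ultimately show ?thesis by (simp add: distrib_left)
qed

lemma squares_le_V:
  assumes "t \<ge> 2*\<tau>"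
  shows "(z t)\<^sup>2 + (y t)\<^sup>2 \<le> V t / c0"
proof -
  have "integral {t - 2*\<tau>..t} (\<lambda>s. (S s)\<^sup>2) \<ge> 0"
    using assms tau_pos
    by (intro integral_nonneg integrable_continuous_real continuous_on_subset[OF continuous_on_S2]) auto
  then have "c0 * ((z t)\<^sup>2 + (y t)\<^sup>2) \<le> V t" using P_ge[of t] unfolding V_def by linarith
  then show ?thesis using c0_pos by (simp add: pos_le_divide_eq mult.commute)
qed

lemma V_nonneg:
  assumes "t \<ge> 2*\<tau>"
  shows "V t \<ge> 0"
proof -
  have "0 \<le> V t / c0"
    using squares_le_V[OF assms] zero_le_power2[of "z t"] zero_le_power2[of "y t"] by linarith
  then show ?thesis using c0_pos by (simp add: zero_le_divide_iff)
qed

lemma g_bound: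
  assumes t: "t \<ge> 2*\<tau>"
  shows "\<bar>g t\<bar> \<le> Kg * exp (- \<beta> * t)"
proof -
  have exp_shift: "exp (- \<beta> * (t - c)) = exp (\<beta> * c) * exp (- \<beta> * t)" for c
    by (simp add: exp_add[symmetric] algebra_simps)
  have "\<bar>g t\<bar> \<le> \<bar>b * k2 t\<bar> + \<bar>p * k1 (t - \<tau>)\<bar> + \<bar>d * k2 (t - 2*\<tau>)\<bar>"
    unfolding g_def by linarith
  also have "\<dots> = b * \<bar>k2 t\<bar> + p * \<bar>k1 (t - \<tau>)\<bar> + \<bar>d\<bar> * \<bar>k2 (t - 2*\<tau>)\<bar>"
    using b_pos p_pos by (simp add: abs_mult)
  also have "\<dots> \<le> b * (K * exp (- \<beta> * t)) + p * (K * (exp (\<beta> * \<tau>) * exp (- \<beta> * t)))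
      + \<bar>d\<bar> * (K * (exp (\<beta> * (2*\<tau>)) * exp (- \<beta> * t)))"
    using k2_bound[of t] k1_bound[of "t - \<tau>"] k2_bound[of "t - 2*\<tau>"] exp_shift t tau_pos b_pos p_pos
    by (intro add_mono mult_left_mono) auto
  also have "\<dots> = Kg * exp (- \<beta> * t)" unfolding Kg_def by (simp add: algebra_simps)
  finally show ?thesis .
qed

lemma perturbation_le_linear:
  assumes t: "t \<ge> 2*\<tau>"
  shows "\<bar>perturbation t\<bar> \<le> Kw * exp (- \<beta> * t) * (\<bar>z t\<bar> + \<bar>y t\<bar>)"
proof -
  define A where "A = \<bar>z t\<bar> + \<bar>y t\<bar>"
  define e where "e = exp (- \<beta> * t)"
  have "\<bar>(p + b) * z t + p * b * y t\<bar> \<le> (p + b + p * b) * A"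
    using abs_lin_comb_le[of "p + b" "z t" "p * b" "y t"] p_pos b_pos unfolding A_def by simp
  with g_bound[OF t] have gX: "\<bar>g t\<bar> * \<bar>(p + b) * z t + p * b * y t\<bar> \<le> Kg * e * ((p + b + p * b) * A)"
    using Kg_nonneg unfolding e_def by (intro mult_mono) auto
  have "\<bar>z t + (p + q) * y t\<bar> \<le> (1 + p + q) * A"
    using abs_lin_comb_le[of 1 "z t" "p + q" "y t"] p_pos q_pos unfolding A_def by (simp add: add.assoc)
  with k2_bound[of t] have kY: "\<bar>k2 t\<bar> * \<bar>z t + (p + q) * y t\<bar> \<le> K * e * ((1 + p + q) * A)"
    using K_nonneg t tau_pos unfolding e_def by (intro mult_mono) auto
  have "\<bar>perturbation t\<bar> \<le> \<bar>2 * g t * ((p + b) * z t + p * b * y t)\<bar>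
      + \<bar>2 * p * b * k2 t * (z t + (p + q) * y t)\<bar>"
    unfolding perturbation_def by (rule abs_triangle_ineq)
  also have "\<dots> = 2 * (\<bar>g t\<bar> * \<bar>(p + b) * z t + p * b * y t\<bar>)
      + 2 * p * b * (\<bar>k2 t\<bar> * \<bar>z t + (p + q) * y t\<bar>)"
    using p_pos b_pos by (simp add: abs_mult)
  also have "\<dots> \<le> 2 * (Kg * e * ((p + b + p * b) * A)) + 2 * p * b * (K * e * ((1 + p + q) * A))"
    using gX kY p_pos b_pos by (intro add_mono mult_left_mono) auto
  also have "\<dots> = Kw * e * A" unfolding Kw_def by (simp add: algebra_simps)
  finally show ?thesis unfolding e_def A_def .
qed

lemma abs_z_plus_abs_y_le_V:
  assumes "t \<ge> 2*\<tau>"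
  shows "\<bar>z t\<bar> + \<bar>y t\<bar> \<le> (2 + 1 / c0) * (1 + V t)"
proof -
  have "\<bar>z t\<bar> + \<bar>y t\<bar> \<le> 2 + ((z t)\<^sup>2 + (y t)\<^sup>2)"
    using abs_le_1_plus_square[of "z t"] abs_le_1_plus_square[of "y t"] by simp
  also have "\<dots> \<le> 2 + V t / c0" using squares_le_V[OF assms] by simp
  also have "\<dots> \<le> (2 + 1 / c0) * (1 + V t)"
    using V_nonneg[OF assms] c0_pos by (simp add: algebra_simps)
  finally show ?thesis .
qed

lemma V'_le:
  assumes t: "t \<ge> 2*\<tau>"
  shows "V' t \<le> - \<gamma> * (z t)\<^sup>2 + Ke * exp (- \<beta> * t) * (1 + V t)"
proof -
  have "perturbation t \<le> Kw * exp (- \<beta> * t) * (\<bar>z t\<bar> + \<bar>y t\<bar>)"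
    using perturbation_le_linear[OF t] by linarith
  also have "\<dots> \<le> Kw * exp (- \<beta> * t) * ((2 + 1 / c0) * (1 + V t))"
    using abs_z_plus_abs_y_le_V[OF t] Kw_nonneg by (intro mult_left_mono) auto
  also have "\<dots> = Ke * exp (- \<beta> * t) * (1 + V t)" unfolding Ke_def by (simp add: mult_ac)
  finally show ?thesis unfolding V'_eq using zero_le_power2[of "z' t - g t"] by linarith
qed

(* The factor E absorbs the exponentially decaying perturbation of V'_le. *)
definition "E t = exp (Ke / \<beta> * exp (- \<beta> * t))"
definition "W t = (1 + V t) * E t + \<gamma> * integral {0..t} (\<lambda>s. (z s)\<^sup>2)"
definition "W0 = (1 + V (3*\<tau>)) * E (3*\<tau>)"

lemma E_ge_1: "E t \<ge> 1"
  unfolding E_def using Ke_nonneg beta_pos by simp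

lemma continuous_on_z2: "continuous_on {0..} (\<lambda>s. (z s)\<^sup>2)"
  using continuous_on_z by (intro continuous_intros)

lemma z2_integrable: "0 \<le> s \<Longrightarrow> (\<lambda>s. (z s)\<^sup>2) integrable_on {s..t}"
  by (intro integrable_continuous_real continuous_on_subset[OF continuous_on_z2]) auto

lemma W_has_derivative_nonpos:
  assumes t: "t > 2*\<tau>"
  shows "\<exists>W'. (W has_real_derivative W') (at t) \<and> W' \<le> 0"
proof -
  define e where "e = exp (- \<beta> * t)"
  have "(E has_real_derivative E t * (Ke / \<beta> * (e * (- \<beta>)))) (at t)"
    unfolding E_def[abs_def] e_def by (intro derivative_eq_intros) auto
  then have E': "(E has_real_derivative - Ke * e * E t) (at t)"
    using beta_pos by (simp add: field_simps)
  have Z: "((\<lambda>s. integral {0..s} (\<lambda>s. (z s)\<^sup>2)) has_real_derivative (z t)\<^sup>2) (at t)"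
    using t tau_pos by (intro integral_atLeast_has_real_derivative continuous_on_z2) auto
  have W': "(W has_real_derivative V' t * E t + (1 + V t) * (- Ke * e * E t) + \<gamma> * (z t)\<^sup>2) (at t)"
    unfolding W_def[abs_def]
    by (rule derivative_eq_intros V_has_derivative[OF t] E' Z refl | simp add: algebra_simps)+
  have "V' t * E t \<le> (- \<gamma> * (z t)\<^sup>2 + Ke * e * (1 + V t)) * E t"
    using V'_le[of t] t E_ge_1[of t] unfolding e_def by (intro mult_right_mono) auto
  then have "V' t * E t + (1 + V t) * (- Ke * e * E t) + \<gamma> * (z t)\<^sup>2 \<le> \<gamma> * (z t)\<^sup>2 * (1 - E t)"
    by (simp add: algebra_simps)
  also have "\<dots> \<le> 0"
    using gamma_pos E_ge_1[of t] by (intro mult_nonneg_nonpos) auto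
  finally show ?thesis using W' by blast
qed

lemma lyapunov_bound:
  assumes t: "t \<ge> 3*\<tau>"
  shows "1 + V t + \<gamma> * integral {3*\<tau>..t} (\<lambda>s. (z s)\<^sup>2) \<le> W0"
proof -
  have "W t \<le> W (3*\<tau>)"
  proof (rule DERIV_nonpos_imp_nonincreasing[OF t])
    fix s assume "3*\<tau> \<le> s"
    then have "s > 2*\<tau>" using tau_pos by linarith
    then show "\<exists>W'. (W has_real_derivative W') (at s) \<and> W' \<le> 0"
      by (rule W_has_derivative_nonpos)
  qed
  moreover have "integral {0..t} (\<lambda>s. (z s)\<^sup>2)
      = integral {0..3*\<tau>} (\<lambda>s. (z s)\<^sup>2) + integral {3*\<tau>..t} (\<lambda>s. (z s)\<^sup>2)"
    using Henstock_Kurzweil_Integration.integral_combine[OF _ t z2_integrable[of 0 t]] tau_pos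
    by simp
  moreover have "1 + V t \<le> (1 + V t) * E t"
    using V_nonneg[of t] E_ge_1[of t] t tau_pos by (simp add: mult_le_cancel_left1)
  ultimately show ?thesis unfolding W_def W0_def by (simp add: distrib_left)
qed

definition "R = 1 + W0 / c0"

lemma abs_z_y_le_R:
  assumes t: "t \<ge> 3*\<tau>"
  shows "\<bar>z t\<bar> \<le> R" "\<bar>y t\<bar> \<le> R"
proof -
  have "integral {3*\<tau>..t} (\<lambda>s. (z s)\<^sup>2) \<ge> 0"
    using t tau_pos by (intro integral_nonneg z2_integrable) auto
  then have "\<gamma> * integral {3*\<tau>..t} (\<lambda>s. (z s)\<^sup>2) \<ge> 0" using gamma_pos by simp
  then have "V t \<le> W0" using lyapunov_bound[OF t] by linarith
  then have "V t / c0 \<le> W0 / c0" using c0_pos by (simp add: divide_right_mono)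
  then have "(z t)\<^sup>2 + (y t)\<^sup>2 \<le> W0 / c0"
    using squares_le_V[of t] t tau_pos by linarith
  then show "\<bar>z t\<bar> \<le> R" "\<bar>y t\<bar> \<le> R"
    unfolding R_def using abs_le_1_plus_square[of "z t"] abs_le_1_plus_square[of "y t"]
      zero_le_power2[of "z t"] zero_le_power2[of "y t"] by linarith+
qed

definition "Lz = (p + b) * R + 2 * p * b * R + \<bar>d\<bar> * R + Kg"

(* From 5\<tau> on, z' only involves values at times \<ge> 3\<tau>, where abs_z_y_le_R applies. *)
lemma abs_z'_le:
  assumes t: "t \<ge> 5*\<tau>"
  shows "\<bar>z' t\<bar> \<le> Lz"
proof -
  have "\<bar>g t\<bar> \<le> Kg * exp (- \<beta> * t)" using g_bound[of t] t tau_pos by auto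
  also have "\<dots> \<le> Kg" using Kg_nonneg t tau_pos beta_pos by (intro mult_left_le) auto
  finally have g: "\<bar>g t\<bar> \<le> Kg" .
  have "\<bar>z' t\<bar> \<le> \<bar>(p + b) * z t\<bar> + \<bar>p * b * y t\<bar>
      + \<bar>p * b * y (t - 2*\<tau>)\<bar> + \<bar>d * z (t - 2*\<tau>)\<bar> + \<bar>g t\<bar>"
    unfolding z'_eq S_def by linarith
  also have "\<dots> = (p + b) * \<bar>z t\<bar> + p * b * \<bar>y t\<bar>
      + p * b * \<bar>y (t - 2*\<tau>)\<bar> + \<bar>d\<bar> * \<bar>z (t - 2*\<tau>)\<bar> + \<bar>g t\<bar>"
    using p_pos b_pos by (simp add: abs_mult)
  also have "\<dots> \<le> (p + b) * R + p * b * R + p * b * R + \<bar>d\<bar> * R + Kg"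
    using abs_z_y_le_R[of t] abs_z_y_le_R[of "t - 2*\<tau>"] g t tau_pos p_pos b_pos
    by (intro add_mono mult_left_mono) auto
  finally show ?thesis unfolding Lz_def by (simp add: algebra_simps)
qed

lemma z_tendsto_0: "(z \<longlongrightarrow> 0) at_top"
proof -
  have "((\<lambda>t. (z t)\<^sup>2) \<longlongrightarrow> 0) at_top"
  proof (rule barbalat[where a = "5*\<tau>" and f' = "\<lambda>t. 2 * z t * z' t" and L = "2 * R * Lz" and B = "W0 / \<gamma>"])
    fix t assume t: "t \<ge> 5*\<tau>"
    then show "((\<lambda>t. (z t)\<^sup>2) has_real_derivative 2 * z t * z' t) (at t)"
      using tau_pos by (auto intro!: derivative_eq_intros z_has_derivative)
    have "\<bar>z t\<bar> * \<bar>z' t\<bar> \<le> R * Lz"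
      using abs_z_y_le_R(1)[of t] abs_z'_le[OF t] t tau_pos by (intro mult_mono) auto
    then show "\<bar>2 * z t * z' t\<bar> \<le> 2 * R * Lz" by (simp add: abs_mult)
    show "(z t)\<^sup>2 \<ge> 0" by simp
    have "integral {3*\<tau>..t} (\<lambda>s. (z s)\<^sup>2)
        = integral {3*\<tau>..5*\<tau>} (\<lambda>s. (z s)\<^sup>2) + integral {5*\<tau>..t} (\<lambda>s. (z s)\<^sup>2)"
      using t tau_pos z2_integrable[of "3*\<tau>" t]
      by (intro Henstock_Kurzweil_Integration.integral_combine[symmetric]) auto
    moreover have "integral {3*\<tau>..5*\<tau>} (\<lambda>s. (z s)\<^sup>2) \<ge> 0"
      using tau_pos by (intro integral_nonneg z2_integrable) auto
    ultimately have "\<gamma> * integral {5*\<tau>..t} (\<lambda>s. (z s)\<^sup>2) \<le> \<gamma> * integral {3*\<tau>..t} (\<lambda>s. (z s)\<^sup>2)"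
      using gamma_pos by simp
    also have "\<dots> \<le> W0"
      using lyapunov_bound[of t] V_nonneg[of t] t tau_pos by linarith
    finally have "\<gamma> * integral {5*\<tau>..t} (\<lambda>s. (z s)\<^sup>2) \<le> W0" .
    then show "integral {5*\<tau>..t} (\<lambda>s. (z s)\<^sup>2) \<le> W0 / \<gamma>"
      using gamma_pos by (simp add: pos_le_divide_eq mult.commute)
  qed
  then have "((\<lambda>t. sqrt ((z t)\<^sup>2)) \<longlongrightarrow> sqrt 0) at_top" by (rule tendsto_real_sqrt)
  then show ?thesis by (simp add: tendsto_rabs_zero_iff)
qed

lemma k1_tendsto_0: "(k1 \<longlongrightarrow> 0) at_top" and k2_tendsto_0: "(k2 \<longlongrightarrow> 0) at_top"
proof -
  have "(k \<longlongrightarrow> 0) at_top" if k: "\<And>t. t \<ge> 0 \<Longrightarrow> \<bar>k t\<bar> \<le> K * exp (- \<beta> * t)" for k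
  proof (rule Lim_null_comparison)
    show "eventually (\<lambda>t. norm (k t) \<le> K * exp (- \<beta> * t)) at_top"
      using eventually_ge_at_top[of "0::real"] by (rule eventually_mono) (use k in auto)
    show "((\<lambda>t. K * exp (- \<beta> * t)) \<longlongrightarrow> 0) at_top"
      using tendsto_mult_right_zero[OF tendsto_exp_neg_mult_at_top[OF beta_pos]] by simp
  qed
  then show "(k1 \<longlongrightarrow> 0) at_top" "(k2 \<longlongrightarrow> 0) at_top"
    using k1_bound k2_bound by blast+
qed

lemma y'_tendsto_0: "(y' \<longlongrightarrow> 0) at_top"
  unfolding y'_eq using tendsto_add[OF z_tendsto_0 k2_tendsto_0] by simp

lemma y_diff_tendsto_0: "0 \<le> c \<Longrightarrow> ((\<lambda>t. y t - y (t - c)) \<longlongrightarrow> 0) at_top"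
  by (rule tendsto_diff_shift_of_deriv_tendsto_0[OF _ y'_tendsto_0, where a = \<tau>])
    (use tau_pos y_has_derivative in auto)

lemma u'_tendsto_0: "(u' \<longlongrightarrow> 0) at_top"
proof -
  have "u' = (\<lambda>t. z (t + \<tau>) + b * (y (t + \<tau>) - y (t + \<tau> - 2*\<tau>)) + k1 t)"
  proof
    fix t
    have "t + \<tau> - \<tau> = t" "t + \<tau> - 2*\<tau> = t - \<tau>" by simp_all
    then show "u' t = z (t + \<tau>) + b * (y (t + \<tau>) - y (t + \<tau> - 2*\<tau>)) + k1 t"
      unfolding u'_def z_def using q_eq by (simp add: algebra_simps)
  qed
  moreover have "((\<lambda>t. z (t + \<tau>) + b * (y (t + \<tau>) - y (t + \<tau> - 2*\<tau>)) + k1 t) \<longlongrightarrow> 0) at_top"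
    using tendsto_add[OF tendsto_add[OF tendsto_at_top_shift[OF z_tendsto_0, of \<tau>]
          tendsto_mult_right_zero[OF tendsto_at_top_shift[OF y_diff_tendsto_0[of "2*\<tau>"], of \<tau>]]]
        k1_tendsto_0] tau_pos
    by simp
  ultimately show ?thesis by simp
qed

lemma pu_qy_tendsto_0: "((\<lambda>t. p * u t + q * y t) \<longlongrightarrow> 0) at_top"
proof -
  have "p * u t + q * y t = - z (t + \<tau>) - b * (y (t + \<tau>) - y (t + \<tau> - \<tau>)) + d * (y t - y (t - \<tau>))" for t
  proof -
    have "t + \<tau> - \<tau> = t" "t + \<tau> - 2*\<tau> = t - \<tau>" by simp_all
    then show ?thesis unfolding z_def using q_eq by (simp add: algebra_simps)
  qed
  moreover have "((\<lambda>t. - z (t + \<tau>) - b * (y (t + \<tau>) - y (t + \<tau> - \<tau>)) + d * (y t - y (t - \<tau>)))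
      \<longlongrightarrow> 0) at_top"
    using tendsto_add[OF tendsto_diff[OF tendsto_minus[OF tendsto_at_top_shift[OF z_tendsto_0, of \<tau>]]
          tendsto_mult_right_zero[OF tendsto_at_top_shift[OF y_diff_tendsto_0[of \<tau>], of \<tau>]]]
        tendsto_mult_right_zero[OF y_diff_tendsto_0[of \<tau>]]] tau_pos
    by simp
  ultimately show ?thesis by simp
qed

(* A first integral: integrating the equations over the delay windows cancels the delayed terms. *)
definition "Q t = u t - y t + p * integral {t-\<tau>..t} u - q * integral {t-\<tau>..t} y
   + d * integral {t-2*\<tau>..t} y - integral {0..t} k1 + integral {0..t} k2"

lemma Q_has_derivative:
  assumes t: "t > 0"
  shows "(Q has_real_derivative 0) (at t)"
proof -
  have window: "((\<lambda>s. integral {s-c..s} f) has_real_derivative f t - f (t - c)) (at t)"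
    if "continuous_on {-2*\<tau>..} f" "c \<le> 2*\<tau>" "0 \<le> c" for f :: "real \<Rightarrow> real" and c
    using that t by (intro integral_window_has_real_derivative) auto
  have "(Q has_real_derivative u' t - y' t + p * (u t - u (t - \<tau>)) - q * (y t - y (t - \<tau>))
      + d * (y t - y (t - 2*\<tau>)) - k1 t + k2 t) (at t)"
    unfolding Q_def[abs_def] using t tau_pos
    by (intro DERIV_add DERIV_diff DERIV_cmult u_has_derivative y_has_derivative window u_cont y_cont
        integral_atLeast_has_real_derivative k1_cont k2_cont) auto
  moreover have "u' t - y' t + p * (u t - u (t - \<tau>)) - q * (y t - y (t - \<tau>))
      + d * (y t - y (t - 2*\<tau>)) - k1 t + k2 t = 0"
    unfolding u'_def y'_def using q_eq by (simp add: algebra_simps)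
  ultimately show ?thesis by simp
qed

lemma continuous_on_Q: "continuous_on {0..t} Q"
proof -
  have window: "continuous_on {0..t} (\<lambda>s. integral {s-c..s} f)"
    if "continuous_on {-2*\<tau>..} f" "c \<le> 2*\<tau>" "0 \<le> c" for f :: "real \<Rightarrow> real" and c
    by (rule continuous_on_subset[OF continuous_on_integral_window[OF that(1,3)]]) (use that(2) in auto)
  have k: "continuous_on {0..t} (\<lambda>s. integral {0..s} f)" if "continuous_on {0..} f" for f :: "real \<Rightarrow> real"
    by (intro indefinite_integral_continuous_1 integrable_continuous_real
        continuous_on_subset[OF that]) auto
  show ?thesis
    unfolding Q_def[abs_def] using tau_pos
    by (intro continuous_intros window k u_cont y_cont k1_cont k2_cont
        continuous_on_subset[OF u_cont] continuous_on_subset[OF y_cont]) auto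
qed

lemma Q_eq_Q0: "t \<ge> 0 \<Longrightarrow> Q t = Q 0"
  using DERIV_isconst_end[OF _ continuous_on_Q] Q_has_derivative by (cases "t = 0") auto

definition "D = p + q + 2 * \<tau> * p * b"

lemma D_pos: "D > 0"
  unfolding D_def using p_pos q_pos b_pos tau_pos by (simp add: add_pos_pos)

lemma D_y_eq:
  assumes "t \<ge> 0"
  shows "D * y t = (1 + p * \<tau>) * (p * u t + q * y t)
    + p * (p * (integral {t-\<tau>..t} u - \<tau> * u t) - q * (integral {t-\<tau>..t} y - \<tau> * y t)
           + d * (integral {t-2*\<tau>..t} y - 2 * \<tau> * y t) - integral {0..t} k1 + integral {0..t} k2 - Q 0)"
proof -
  define Q0 where "Q0 = Q 0"
  have Q0_eq: "Q0 = u t - y t + p * integral {t-\<tau>..t} u - q * integral {t-\<tau>..t} y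
      + d * integral {t-2*\<tau>..t} y - integral {0..t} k1 + integral {0..t} k2"
    using Q_eq_Q0[OF assms] unfolding Q0_def Q_def[of t] by simp
  show ?thesis unfolding D_def Q0_def[symmetric] Q0_eq using q_eq by algebra
qed

lemma tendsto_u_y:
  assumes H1: "((\<lambda>t. integral {0..t} k1) \<longlongrightarrow> H1) at_top"
    and H2: "((\<lambda>t. integral {0..t} k2) \<longlongrightarrow> H2) at_top"
  shows "(y \<longlongrightarrow> - p * ((Q 0 + H1 - H2) / D)) at_top"
    and "(u \<longlongrightarrow> q * ((Q 0 + H1 - H2) / D)) at_top"
proof -
  have window: "((\<lambda>t. integral {t-c..t} f - c * f t) \<longlongrightarrow> 0) at_top"
    if "\<And>t. t > 0 \<Longrightarrow> (f has_real_derivative f' t) (at t)" "(f' \<longlongrightarrow> 0) at_top" "0 \<le> c"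
    for f f' :: "real \<Rightarrow> real" and c
    using that tau_pos by (intro tendsto_integral_window_of_deriv_tendsto_0[where a = \<tau>]) auto
  have r1: "((\<lambda>t. integral {t-\<tau>..t} u - \<tau> * u t) \<longlongrightarrow> 0) at_top"
    using tau_pos by (intro window[OF u_has_derivative u'_tendsto_0]) auto
  have r2: "((\<lambda>t. integral {t-\<tau>..t} y - \<tau> * y t) \<longlongrightarrow> 0) at_top"
    and r3: "((\<lambda>t. integral {t-2*\<tau>..t} y - 2 * \<tau> * y t) \<longlongrightarrow> 0) at_top"
    using tau_pos by (intro window[OF y_has_derivative y'_tendsto_0]; simp)+
  define F where "F t = ((1 + p * \<tau>) * (p * u t + q * y t)
      + p * (p * (integral {t-\<tau>..t} u - \<tau> * u t) - q * (integral {t-\<tau>..t} y - \<tau> * y t)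
             + d * (integral {t-2*\<tau>..t} y - 2 * \<tau> * y t) - integral {0..t} k1 + integral {0..t} k2 - Q 0)) / D" for t
  have "(F \<longlongrightarrow> ((1 + p * \<tau>) * 0 + p * (p * 0 - q * 0 + d * 0 - H1 + H2 - Q 0)) / D) at_top"
    unfolding F_def using D_pos by (intro tendsto_intros pu_qy_tendsto_0 H1 H2 r1 r2 r3) auto
  moreover have "eventually (\<lambda>t. F t = y t) at_top"
    using eventually_ge_at_top[of "0::real"]
    by (rule eventually_mono) (use D_y_eq D_pos in \<open>simp add: F_def field_simps\<close>)
  ultimately have y_lim: "(y \<longlongrightarrow> - p * ((Q 0 + H1 - H2) / D)) at_top"
    by (simp add: tendsto_cong field_simps)
  then show "(y \<longlongrightarrow> - p * ((Q 0 + H1 - H2) / D)) at_top" .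
  have "((\<lambda>t. ((p * u t + q * y t) - q * y t) / p) \<longlongrightarrow> (0 - q * (- p * ((Q 0 + H1 - H2) / D))) / p) at_top"
    by (intro tendsto_intros pu_qy_tendsto_0 y_lim) (use p_pos in simp)
  then show "(u \<longlongrightarrow> q * ((Q 0 + H1 - H2) / D)) at_top"
    using p_pos by simp
qed

end

section \<open>The vector system\<close>

lemma continuous_on_solution:
  fixes \<phi> x X :: "real \<Rightarrow> real^2"
  assumes "\<tau> > 0" "continuous_on {-2*\<tau>..0} \<phi>"
    and x_init: "\<And>\<theta>. \<theta> \<in> {-2*\<tau>..0} \<Longrightarrow> x \<theta> = \<phi> \<theta>"
    and x_ode: "\<And>t. t \<ge> 0 \<Longrightarrow> (x has_vector_derivative X t) (at t within {0..})"
  shows "continuous_on {-2*\<tau>..} x"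
proof -
  have "continuous_on {-2*\<tau>..0} x"
    using continuous_on_cong[of "{-2*\<tau>..0}" "{-2*\<tau>..0}" x \<phi>] x_init assms(2) by simp
  moreover have "continuous_on {0..} x"
    using has_vector_derivative_continuous[OF x_ode]
    by (auto simp: continuous_on_eq_continuous_within)
  ultimately have "continuous_on ({-2*\<tau>..0} \<union> {0..}) x"
    by (intro continuous_on_closed_Un) auto
  moreover have "{-2*\<tau>..0} \<union> {0..} = {-2*\<tau>..}" using assms(1) by auto
  ultimately show ?thesis by simp
qed

lemma component_has_real_derivative:
  fixes x :: "real \<Rightarrow> real^'n"
  assumes "(x has_vector_derivative X) (at t within {0..})" "t > 0"
  shows "((\<lambda>s. x s $ i) has_real_derivative X $ i) (at t)"
proof -
  have "(x has_vector_derivative X) (at t within {0<..})"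
    by (rule has_vector_derivative_within_subset[OF assms(1)]) auto
  then have "(x has_vector_derivative X) (at t)"
    using has_vector_derivative_within_open[of t "{0<..}"] assms(2) by auto
  from bounded_linear.has_vector_derivative[OF bounded_linear_vec_nth this, of i]
  show ?thesis by (simp add: has_real_derivative_iff_has_vector_derivative)
qed

lemma integral_history_component:
  fixes \<phi> x :: "real \<Rightarrow> real^'n"
  assumes \<phi>: "continuous_on {-2*\<tau>..0} \<phi>"
    and x_init: "\<And>\<theta>. \<theta> \<in> {-2*\<tau>..0} \<Longrightarrow> x \<theta> = \<phi> \<theta>"
    and c: "0 \<le> c" "c \<le> 2*\<tau>"
  shows "integral {-c..0} (\<lambda>s. x s $ i) = integral {0..c} (\<lambda>\<theta>. \<phi> (\<theta> - c)) $ i"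
proof -
  have "integral {-c..0} (\<lambda>s. x s $ i) = integral {-c..0} (\<lambda>s. \<phi> s $ i)"
    by (rule integral_cong) (use x_init c in auto)
  also have "\<dots> = integral {0..c} (\<lambda>\<theta>. \<phi> (\<theta> - c) $ i)"
    using integral_shift_real_ivl[of "-c" "-c" 0 "\<lambda>s. \<phi> s $ i"] by simp
  also have "\<dots> = integral {0..c} (\<lambda>\<theta>. \<phi> (\<theta> - c)) $ i"
    using c by (intro integral_component_eq_cart integrable_continuous_real
        continuous_on_compose2[OF \<phi>] continuous_intros) auto
  finally show ?thesis .
qed

lemma tendsto_integral_component_of_exp_bound:
  fixes h :: "real \<Rightarrow> real^'n"
  assumes hc: "continuous_on {0..} h"
    and "\<And>t. t \<ge> 0 \<Longrightarrow> norm (h t) \<le> K * exp (- \<beta> * t)" and "\<beta> > 0"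
  shows "((\<lambda>t. integral {0..t} (\<lambda>s. h s $ i)) \<longlongrightarrow> integral {0..} h $ i) at_top"
proof -
  have "integral {0..t} (\<lambda>s. h s $ i) = integral {0..t} h $ i" for t
    by (intro integral_component_eq_cart integrable_continuous_real continuous_on_subset[OF hc]) auto
  then show ?thesis
    using tendsto_vec_nth[OF tendsto_integral_atLeast_of_exp_bound[OF assms]] by simp
qed

lemma char_matrix_eq:
  assumes "A = vector [vector [- p, 0], vector [0, - b]]"
    and "B = vector [vector [0, - q], vector [- p, 0]]" and "C = vector [vector [0, 0], vector [0, - d]]"
  shows "char_matrix A B C \<tau> s =
    vector [vector [s + of_real p, exp (- of_real \<tau> * s) * of_real q],
            vector [exp (- of_real \<tau> * s) * of_real p, s + of_real b + exp (- 2 * of_real \<tau> * s) * of_real d]]"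
  unfolding char_matrix_def cmat_def assms by (simp add: vec_eq_iff forall_2 algebra_simps)

lemma residue_char_matrix:
  fixes M :: "complex^2^2"
  assumes "p > 0" "q > 0" "b > 0" "\<tau> > 0" and q: "q = b + d"
    and \<Delta>: "\<And>s. \<Delta> s =
      vector [vector [s + of_real p, exp (- of_real \<tau> * s) * of_real q],
              vector [exp (- of_real \<tau> * s) * of_real p, s + of_real b + exp (- 2 * of_real \<tau> * s) * of_real d]]"
    and M: "((\<lambda>s. \<chi> i j. s * matrix_inv (\<Delta> s) $ i $ j) \<longlongrightarrow> M) (at 0)"
  defines "D \<equiv> p + q + 2 * \<tau> * p * b"
  shows "M = cmat (vector [vector [q / D, - q / D], vector [- p / D, p / D]])"
proof -
  define det where "det s = (s + of_real p) * (s + of_real b + exp (- 2 * of_real \<tau> * s) * of_real d)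
      - exp (- of_real \<tau> * s) * of_real q * (exp (- of_real \<tau> * s) * of_real p)" for s :: complex
  have "(det has_field_derivative of_real D) (at 0)"
    unfolding det_def[abs_def] D_def
    by (rule derivative_eq_intros refl | simp add: q algebra_simps)+
  moreover have "det 0 = 0" unfolding det_def q by (simp add: algebra_simps)
  ultimately have det_lim: "((\<lambda>s. det s / s) \<longlongrightarrow> of_real D) (at 0)"
    by (simp add: has_field_derivative_iff)
  have "D > 0" unfolding D_def using assms(1-4) by (simp add: add_pos_pos)
  then have D: "(of_real D :: complex) \<noteq> 0" by simp
  have a: "((\<lambda>s::complex. s + of_real p) \<longlongrightarrow> of_real p) (at 0)"
    by (auto intro!: tendsto_eq_intros)
  have bc: "((\<lambda>s::complex. exp (- of_real \<tau> * s) * of_real c) \<longlongrightarrow> of_real c) (at 0)" for c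
    by (auto intro!: tendsto_eq_intros)
  have e: "((\<lambda>s::complex. s + of_real b + exp (- 2 * of_real \<tau> * s) * of_real d) \<longlongrightarrow> of_real q) (at 0)"
    using q by (auto intro!: tendsto_eq_intros)
  have "((\<lambda>s. \<chi> i j. s * matrix_inv (\<Delta> s) $ i $ j) \<longlongrightarrow>
      vector [vector [of_real q / of_real D, - of_real q / of_real D],
              vector [- of_real p / of_real D, of_real p / of_real D]]) (at 0)"
    unfolding \<Delta> using tendsto_mult_matrix_inv_2x2[OF a bc bc e det_lim[unfolded det_def] D] .
  then show ?thesis
    using tendsto_unique[OF at_neq_bot M] by (simp add: cmat_def vec_eq_iff forall_2)
qed

lemma delay_system_components:
  fixes A B C :: "real^2^2" and h x :: "real \<Rightarrow> real^2"
  assumes "p > 0" "b > 0" "\<bar>d\<bar> < b" "q = b + d" "\<tau> > 0" "\<beta> > 0"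
    and A: "A = vector [vector [- p, 0], vector [0, - b]]"
    and B: "B = vector [vector [0, - q], vector [- p, 0]]"
    and C: "C = vector [vector [0, 0], vector [0, - d]]"
    and h_cont: "continuous_on {0..} h"
    and h_bound: "\<And>t. t \<ge> 0 \<Longrightarrow> norm (h t) \<le> K * exp (- \<beta> * t)"
    and x_cont: "continuous_on {-2*\<tau>..} x"
    and x_ode: "\<And>t. t \<ge> 0 \<Longrightarrow>
        (x has_vector_derivative (A *v x t + B *v x (t - \<tau>) + C *v x (t - 2*\<tau>) + h t)) (at t within {0..})"
  shows "delay_system p b d q \<tau> K \<beta> (\<lambda>t. x t $ 1) (\<lambda>t. x t $ 2) (\<lambda>t. h t $ 1) (\<lambda>t. h t $ 2)"
proof -
  have x_i: "continuous_on {-2*\<tau>..} (\<lambda>t. x t $ i)" and h_i: "continuous_on {0..} (\<lambda>t. h t $ i)" for i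
    using x_cont h_cont by (auto intro: continuous_on_component)
  have h_i_bound: "\<bar>h t $ i\<bar> \<le> K * exp (- \<beta> * t)" if "t \<ge> 0" for t i
    using order_trans[OF component_le_norm_cart h_bound[OF that]] by simp
  have der: "((\<lambda>t. x t $ i) has_real_derivative
      (A *v x t + B *v x (t - \<tau>) + C *v x (t - 2*\<tau>) + h t) $ i) (at t)" if "t > 0" for t i
    using x_ode that by (intro component_has_real_derivative) auto
  have "((\<lambda>t. x t $ 1) has_real_derivative - p * x t $ 1 - q * x (t - \<tau>) $ 2 + h t $ 1) (at t)"
    if "t > 0" for t
    using der[OF that, of 1] unfolding A B C by (simp add: matrix_vector_mult_def sum_2 algebra_simps)
  moreover have "((\<lambda>t. x t $ 2) has_real_derivative
      - b * x t $ 2 - p * x (t - \<tau>) $ 1 - d * x (t - 2*\<tau>) $ 2 + h t $ 2) (at t)" if "t > 0" for t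
    using der[OF that, of 2] unfolding A B C by (simp add: matrix_vector_mult_def sum_2 algebra_simps)
  ultimately show ?thesis
    using assms(1-6) x_i h_i h_i_bound by unfold_locales auto
qed

theorem delay_system_tendsto_residue:
  fixes p b d q \<tau> K \<beta> :: real and A B C :: "real^2^2" and M :: "complex^2^2"
    and h \<phi> x :: "real \<Rightarrow> real^2"
  assumes params: "p > 0" "b > 0" "\<bar>d\<bar> < b" "q = b + d" "\<tau> > 0" "\<beta> > 0"
    and A: "A = vector [vector [- p, 0], vector [0, - b]]"
    and B: "B = vector [vector [0, - q], vector [- p, 0]]"
    and C: "C = vector [vector [0, 0], vector [0, - d]]"
    and M: "((\<lambda>s. (\<chi> i j. s * matrix_inv (char_matrix A B C \<tau> s) $ i $ j)) \<longlongrightarrow> M) (at 0)"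
    and h_cont: "continuous_on {0..} h"
    and h_bound: "\<And>t. t \<ge> 0 \<Longrightarrow> norm (h t) \<le> K * exp (- \<beta> * t)"
    and phi_cont: "continuous_on {-2*\<tau>..0} \<phi>"
    and x_init: "\<And>\<theta>. \<theta> \<in> {-2*\<tau>..0} \<Longrightarrow> x \<theta> = \<phi> \<theta>"
    and x_ode: "\<And>t. t \<ge> 0 \<Longrightarrow>
        (x has_vector_derivative (A *v x t + B *v x (t - \<tau>) + C *v x (t - 2*\<tau>) + h t)) (at t within {0..})"
  shows "((\<lambda>t. cvec (x t)) \<longlongrightarrow>
           M *v cvec (\<phi> 0 + B *v integral {0..\<tau>} (\<lambda>\<theta>. \<phi> (\<theta> - \<tau>))
                      + C *v integral {0..2*\<tau>} (\<lambda>\<theta>. \<phi> (\<theta> - 2*\<tau>))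
                      + integral {0..} h)) at_top"
proof -
  interpret delay_system p b d q \<tau> K \<beta> "\<lambda>t. x t $ 1" "\<lambda>t. x t $ 2" "\<lambda>t. h t $ 1" "\<lambda>t. h t $ 2"
    using continuous_on_solution[OF params(5) phi_cont x_init x_ode]
    by (intro delay_system_components[OF params A B C h_cont h_bound _ x_ode])
  define H where "H = integral {0..} h"
  have H: "((\<lambda>t. integral {0..t} (\<lambda>s. h s $ i)) \<longlongrightarrow> H $ i) at_top" for i
    unfolding H_def by (rule tendsto_integral_component_of_exp_bound[OF h_cont h_bound params(6)])
  define \<kappa> where "\<kappa> = (Q 0 + H $ 1 - H $ 2) / D"
  have "((\<lambda>t. vector [x t $ 1, x t $ 2] :: real^2) \<longlongrightarrow> vector [q * \<kappa>, - p * \<kappa>]) at_top"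
    unfolding \<kappa>_def by (intro tendsto_vector_2 tendsto_u_y[OF H H])
  moreover have "vector [x t $ 1, x t $ 2] = x t" for t
    by (simp add: vec_eq_iff forall_2)
  ultimately have x_lim: "(x \<longlongrightarrow> vector [q * \<kappa>, - p * \<kappa>]) at_top" by simp
  define W where "W = \<phi> 0 + B *v integral {0..\<tau>} (\<lambda>\<theta>. \<phi> (\<theta> - \<tau>))
      + C *v integral {0..2*\<tau>} (\<lambda>\<theta>. \<phi> (\<theta> - 2*\<tau>)) + H"
  have "Q 0 = W $ 1 - W $ 2 - (H $ 1 - H $ 2)"
    using integral_history_component[OF phi_cont x_init, of \<tau>]
      integral_history_component[OF phi_cont x_init, of "2*\<tau>"] x_init[of 0] params(5)
    unfolding Q_def W_def B C by (simp add: matrix_vector_mult_def sum_2 algebra_simps)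
  then have W1: "W $ 1 = W $ 2 + \<kappa> * D" unfolding \<kappa>_def using D_pos by simp
  have "M = cmat (vector [vector [q / D, - q / D], vector [- p / D, p / D]])"
    using residue_char_matrix[OF params(1) q_pos params(2,5,4) char_matrix_eq[OF A B C] M]
    unfolding D_def .
  moreover have "(vector [vector [q / D, - q / D], vector [- p / D, p / D]] :: real^2^2) *v W
      = vector [q * \<kappa>, - p * \<kappa>]"
    using D_pos by (simp add: W1 vec_eq_iff forall_2 matrix_vector_mult_def sum_2 field_simps)
  ultimately have "M *v cvec W = cvec (vector [q * \<kappa>, - p * \<kappa>])"
    by (simp add: cmat_mult_cvec)
  then show ?thesis
    using tendsto_cvec[OF x_lim] unfolding W_def H_def by simp
qed

lemma coefficient_bounds:
  fixes c1 c3 a1 a2 :: real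
  assumes c1: "c1 > 0" and c3: "c3 > 0"
    and a1: "a1 = 2 * pi * c3 * (2 * c1 / (c1 + c3))"
    and a2: "a2 = 2 * pi * c3 * ((c1 - c3) / (c1 + c3))"
  shows "a1 > 0" and "\<bar>a2\<bar> < a1 - a2"
proof -
  show "a1 > 0" unfolding a1 using c1 c3 by simp
  have "2 * c1 / (c1 + c3) - (c1 - c3) / (c1 + c3) = (c1 + c3) / (c1 + c3)"
    by (simp add: diff_divide_distrib[symmetric])
  also have "\<dots> = 1" using c1 c3 by simp
  finally have "a1 - a2 = 2 * pi * c3 * 1"
    unfolding a1 a2 by (simp only: right_diff_distrib[symmetric])
  moreover have "\<bar>c1 - c3\<bar> / (c1 + c3) < 1" using c1 c3 by (simp add: divide_less_eq abs_less_iff)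
  then have "2 * pi * c3 * (\<bar>c1 - c3\<bar> / (c1 + c3)) < 2 * pi * c3 * 1"
    using c3 by (intro mult_strict_left_mono) auto
  then have "\<bar>a2\<bar> < 2 * pi * c3"
    unfolding a2 using c1 c3 by (simp add: abs_mult)
  ultimately show "\<bar>a2\<bar> < a1 - a2" by simp
qed

theorem corollary1:
  fixes c1 c3 r2 r4 \<tau> a1 a2 K1 \<beta> :: real
    and A B C :: "real^2^2"
    and M :: "complex^2^2"
    and h \<phi> x :: "real \<Rightarrow> real^2"
  assumes c1: "c1 > 0" and c3: "c3 > 0" and r2: "r2 > 0" and r4: "r4 > 0" and tau: "\<tau> > 0"
    and a1: "a1 = 2 * pi * c3 * (2 * c1 / (c1 + c3))"
    and a2: "a2 = 2 * pi * c3 * ((c1 - c3) / (c1 + c3))"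
    and A: "A = vector [vector [- a1 * r2, 0], vector [0, - (a1 - a2) * r4]]"
    and B: "B = vector [vector [0, - a1 * r4], vector [- a1 * r2, 0]]"
    and C: "C = vector [vector [0, 0], vector [0, - a2 * r4]]"
    and M: "((\<lambda>s. (\<chi> i j. s * matrix_inv (char_matrix A B C \<tau> s) $ i $ j)) \<longlongrightarrow> M) (at 0)"
    and h_cont: "continuous_on {0..} h"
    and K1: "K1 > 0" and beta: "\<beta> > 0"
    and h_bound: "\<And>t. t \<ge> 0 \<Longrightarrow> norm (h t) \<le> K1 * exp (- \<beta> * t)"
    and phi_cont: "continuous_on {-2*\<tau>..0} \<phi>"
    and x_init: "\<And>\<theta>. \<theta> \<in> {-2*\<tau>..0} \<Longrightarrow> x \<theta> = \<phi> \<theta>"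
    and x_ode: "\<And>t. t \<ge> 0 \<Longrightarrow>
        (x has_vector_derivative
           (A *v x t + B *v x (t - \<tau>) + C *v x (t - 2*\<tau>) + h t)) (at t within {0..})"
  shows "((\<lambda>t. cvec (x t)) \<longlongrightarrow>
           M *v cvec (\<phi> 0 + B *v integral {0..\<tau>} (\<lambda>\<theta>. \<phi> (\<theta> - \<tau>))
                      + C *v integral {0..2*\<tau>} (\<lambda>\<theta>. \<phi> (\<theta> - 2*\<tau>))
                      + integral {0..} h)) at_top"
proof -
  note a = coefficient_bounds[OF c1 c3 a1 a2]
  have "\<bar>a2 * r4\<bar> < (a1 - a2) * r4" using a(2) r4 by (simp add: abs_mult)
  with a r2 r4 show ?thesis
    by (intro delay_system_tendsto_residue[where p = "a1 * r2" and b = "(a1 - a2) * r4"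
          and d = "a2 * r4" and q = "a1 * r4", OF _ _ _ _ tau beta _ _ _ M h_cont h_bound phi_cont x_init x_ode])
      (auto simp: A B C algebra_simps)
qed

end
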